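(* Assume (A1)–(A3). If $m_1<0$, then for every $\theta>0$ there exist $C>0$ and $\delta>0$ such that for all $(i,j)\in\mathbb N\times\mathbb Z$ and $k\in\mathbb N$, \[\mathbb E_{(i,j)}\bigl(\exp(\delta T_1^k)\bigr)\le C\exp(\theta i),\] where $T_1^k=\inf\{n>0: X_1(n)\le\max(k_0-1,k)\}$.
   Context: Let $\mathbb N=\{0,1,2,\dots\}$ and fix an integer $k_0\ge1$. Let $\mu$, $\mu'_j$ ($0\le j<k_0$), $\mu''_i$ ($0\le i<k_0$), $\mu_{ij}$ ($0\le i,j<k_0$) be probability measures on $\mathbb Z^2$. The random walk $Z=(X(n),Y(n))$ on $\mathbb N^2$ has transition probabilities $p((i,j)\to(i',j'))$ equal to $\mu(i'-i,j'-j)$ if $i,j\ge k_0$; $\mu'_j(i'-i,j'-j)$ if $i\ge k_0$, $0\le j<k_0$; $\mu''_i(i'-i,j'-j)$ if $0\le i<k_0$, $j\ge k_0$; $\mu_{ij}(i'-i,j'-j)$ if $0\le i,j<k_0$. Assumptions: (A1) $\mu(a,b)=0$ if $a<-k_0$ or $b<-k_0$; $\mu'_j(a,b)=0$ if $a<-k_0$ or $b<-j$; $\mu''_i(a,b)=0$ if $b<-k_0$ or $a<-i$; $\mu_{ij}(a,b)=0$ if $a<-i$ or $b<-j$. (A2) There are $\delta,\gamma,C>0$ with $\sup_{(i,j)\in\mathbb N^2}\mathbb E_{(i,j)}[\exp(\delta(X(1)-i)+\gamma(Y(1)-j))]\le C$. (A3) $Z_0,Z_1,Z_2,Z$ are irreducible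 on their state spaces. $Z_0$: random walk on $\mathbb Z^2$ with increment law $\mu$; $m_1=\sum a\mu(a,b)$. $Z_1=(X_1,Y_1)$: Markov chain on $\mathbb N\times\mathbb Z$ with transitions $\mu(i'-i,j'-j)$ from $(i,j)$ if $i\ge k_0$ and $\mu''_i(i'-i,j'-j)$ if $0\le i<k_0$; $\mathbb P_{(i,j)},\mathbb E_{(i,j)}$ refer to it started at $(i,j)$. $Z_2$: Markov chain on $\mathbb Z\times\mathbb N$ with transitions $\mu$ if $j\ge k_0$ and $\mu'_j$ if $0\le j<k_0$. *)

theory Defs
  imports "HOL-Probability.Probability"
begin

type_synonym state = "int \<times> int"

definition shift :: "state \<Rightarrow> (int \<times> int) pmf \<Rightarrow> state pmf" where
  "shift x p = map_pmf (\<lambda>d. (fst x + fst d, snd x + snd d)) p"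

text \<open>Transition kernels (next-state laws). States are embedded in int x int;
  values of the kernels outside the respective state spaces are irrelevant.\<close>
definition stepZ0 :: "(int \<times> int) pmf \<Rightarrow> state \<Rightarrow> state pmf" where
  "stepZ0 \<mu> x = shift x \<mu>"

definition stepZ1 :: "nat \<Rightarrow> (int \<times> int) pmf \<Rightarrow> (nat \<Rightarrow> (int \<times> int) pmf) \<Rightarrow> state \<Rightarrow> state pmf" where
  "stepZ1 k0 \<mu> \<mu>'' x = shift x (if fst x \<ge> int k0 then \<mu> else \<mu>'' (nat (fst x)))"

definition stepZ2 :: "nat \<Rightarrow> (int \<times> int) pmf \<Rightarrow> (nat \<Rightarrow> (int \<times> int) pmf) \<Rightarrow> state \<Rightarrow> state pmf" where
  "stepZ2 k0 \<mu> \<mu>' x = shift x (if snd x \<ge> int k0 then \<mu> else \<mu>' (nat (snd x)))"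

definition lawZ :: "nat \<Rightarrow> (int \<times> int) pmf \<Rightarrow> (nat \<Rightarrow> (int \<times> int) pmf) \<Rightarrow> (nat \<Rightarrow> (int \<times> int) pmf)
    \<Rightarrow> (nat \<Rightarrow> nat \<Rightarrow> (int \<times> int) pmf) \<Rightarrow> state \<Rightarrow> (int \<times> int) pmf" where
  "lawZ k0 \<mu> \<mu>' \<mu>'' \<mu>2 x =
     (if fst x \<ge> int k0 \<and> snd x \<ge> int k0 then \<mu>
      else if fst x \<ge> int k0 then \<mu>' (nat (snd x))
      else if snd x \<ge> int k0 then \<mu>'' (nat (fst x))
      else \<mu>2 (nat (fst x)) (nat (snd x)))"

definition stepZ :: "nat \<Rightarrow> (int \<times> int) pmf \<Rightarrow> (nat \<Rightarrow> (int \<times> int) pmf) \<Rightarrow> (nat \<Rightarrow> (int \<times> int) pmf)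
    \<Rightarrow> (nat \<Rightarrow> nat \<Rightarrow> (int \<times> int) pmf) \<Rightarrow> state \<Rightarrow> state pmf" where
  "stepZ k0 \<mu> \<mu>' \<mu>'' \<mu>2 x = shift x (lawZ k0 \<mu> \<mu>' \<mu>'' \<mu>2 x)"

definition irreducible_on :: "'s set \<Rightarrow> ('s \<Rightarrow> 's pmf) \<Rightarrow> bool" where
  "irreducible_on S P \<longleftrightarrow>
     (\<forall>x\<in>S. \<forall>y\<in>S. (x, y) \<in> {(u, v). u \<in> S \<and> v \<in> S \<and> pmf (P u) v > 0}\<^sup>*)"

fun traj :: "('s \<Rightarrow> 's pmf) \<Rightarrow> nat \<Rightarrow> 's \<Rightarrow> 's list pmf" where
  "traj P 0 x = return_pmf [x]"
| "traj P (Suc n) x = bind_pmf (traj P n x) (\<lambda>p. map_pmf (\<lambda>y. p @ [y]) (P (last p)))"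

text \<open>P_x(T = n) for T = inf{n > 0. Z(n) \<in> A}, n \<ge> 1.\<close>
definition hit_prob :: "('s \<Rightarrow> 's pmf) \<Rightarrow> 's set \<Rightarrow> nat \<Rightarrow> 's \<Rightarrow> real" where
  "hit_prob P A n x = measure_pmf.prob (traj P n x)
      {p. p ! n \<in> A \<and> (\<forall>m\<in>{1..<n}. p ! m \<notin> A)}"

text \<open>P_x(T = \<infinity>) = lim_n P_x(T > n) (decreasing limit).\<close>
definition escape_prob :: "('s \<Rightarrow> 's pmf) \<Rightarrow> 's set \<Rightarrow> 's \<Rightarrow> real" where
  "escape_prob P A x = (INF n. measure_pmf.prob (traj P n x) {p. \<forall>m\<in>{1..n}. p ! m \<notin> A})"

text \<open>E_x(exp(\<delta> T)), with exp(\<delta> \<infinity>) = \<infinity>.\<close>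
definition exp_moment_hit :: "('s \<Rightarrow> 's pmf) \<Rightarrow> 's set \<Rightarrow> real \<Rightarrow> 's \<Rightarrow> ennreal" where
  "exp_moment_hit P A \<delta> x =
     (\<Sum>n. ennreal (exp (\<delta> * real (Suc n))) * ennreal (hit_prob P A (Suc n) x))
     + \<top> * ennreal (escape_prob P A x)"

end

theory Submission
  imports Defs
begin

text \<open>Off the target set A = {x. fst x \<le> max (k0 - 1) k} the chain Z1 moves like the
  free walk with increment law \<mu>, whose horizontal drift m1 is negative. Hence for small
  s > 0 the exponential moment \<rho> = E exp(s a) of a \<mu>-increment (a, b) is below 1: the
  function L z = exp(s fst z) satisfies the geometric drift condition P L \<le> \<rho> L off A.
  Since Z1 never leaves the half-plane fst z \<ge> 0, where L \<ge> 1, the process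
  \<rho>^-n L(Z1(n)) stopped at the hitting time T is a supermartingale. After a first step
  from (i, j) this gives E \<rho>^-T \<le> \<rho>^-1 E L(Z1(1)) \<le> C exp(s i), and also P(T = \<infinity>) = 0.
  Choosing s \<le> \<theta> and \<delta> = - ln \<rho> proves the bound. Hypothesis (A2) is used only for the
  exponential moment of the horizontal jumps of Z1.\<close>

lemma exp_times_one_minus_le_1: "exp (t::real) * (1 - t) \<le> 1"
  using exp_ge_add_one_self[of "-t"] by (simp add: exp_minus field_simps)

lemma exp_le_quadratic: "exp (t::real) \<le> 1 + t + t\<^sup>2 * (1 + exp t)"
proof (cases "t \<le> 0")
  case True
  have "exp t * (1 - t) \<le> (1 + t + t\<^sup>2) * (1 - t)"
  proof (rule order_trans[OF exp_times_one_minus_le_1])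
    show "1 \<le> (1 + t + t\<^sup>2) * (1 - t)"
      using True by (simp add: algebra_simps power2_eq_square mult_nonpos_nonneg)
  qed
  then have "exp t \<le> 1 + t + t\<^sup>2"
    using True by (simp add: mult_le_cancel_right)
  moreover have "0 \<le> t\<^sup>2 * exp t"
    by simp
  ultimately show ?thesis
    unfolding distrib_left mult_1_right by linarith
next
  case False
  have "exp t \<le> 1 + t + t\<^sup>2 * exp t"
  proof (cases "t < 1")
    case True
    have "exp t * (1 - t) * (1 + t) \<le> 1 + t"
      using False exp_times_one_minus_le_1 by (simp add: mult_right_mono)
    then show ?thesis by (simp add: algebra_simps power2_eq_square)
  next
    case False
    then have "exp t \<le> t\<^sup>2 * exp t"
      by (simp add: one_le_power)
    then show ?thesis using \<open>\<not> t \<le> 0\<close> by linarith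
  qed
  then show ?thesis
    unfolding distrib_left mult_1_right using zero_le_power2[of t] by linarith
qed

lemma sq_times_one_plus_exp_le:
  fixes a s d K :: real
  assumes s: "0 < s" "s \<le> d / 2" and lower: "-K \<le> a"
  shows "a\<^sup>2 * (1 + exp (s * a)) \<le> 2 * K\<^sup>2 + 16 / d\<^sup>2 * exp (d * a)"
proof (cases "a \<le> 0")
  case True
  have "a\<^sup>2 \<le> K\<^sup>2"
    using lower True by (simp add: abs_le_square_iff[symmetric])
  moreover have "exp (s * a) \<le> 1"
    using True s by (simp add: mult_nonneg_nonpos)
  ultimately have "a\<^sup>2 * (1 + exp (s * a)) \<le> K\<^sup>2 * 2"
    by (intro mult_mono) auto
  then show ?thesis by (simp add: add_increasing2)
next
  case False
  have da: "0 \<le> d * a / 2"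
    using False s by simp
  have "(d * a / 2)\<^sup>2 \<le> 2 * exp (d * a / 2)"
    using exp_lower_Taylor_quadratic[OF da] da by linarith
  then have a2: "a\<^sup>2 \<le> 8 / d\<^sup>2 * exp (d * a / 2)"
    using s by (simp add: field_simps power2_eq_square)
  have "exp (s * a) \<le> exp (d * a / 2)" and "1 \<le> exp (s * a)"
    using False s by (simp_all add: mult_right_mono)
  then have "1 + exp (s * a) \<le> 2 * exp (d * a / 2)" by linarith
  with a2 have "a\<^sup>2 * (1 + exp (s * a)) \<le> 8 / d\<^sup>2 * exp (d * a / 2) * (2 * exp (d * a / 2))"
    by (intro mult_mono) auto
  also have "\<dots> = 16 / d\<^sup>2 * exp (d * a)"
    by (simp flip: exp_add)
  finally show ?thesis by (simp add: add_increasing)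
qed

lemma exp_le_second_order_bound:
  fixes a s d K :: real
  assumes s: "0 < s" "s \<le> d / 2" and lower: "-K \<le> a"
  shows "exp (s * a) \<le> 1 + s * a + s\<^sup>2 * (2 * K\<^sup>2 + 16 / d\<^sup>2 * exp (d * a))"
proof -
  have "exp (s * a) \<le> 1 + s * a + (s * a)\<^sup>2 * (1 + exp (s * a))"
    by (rule exp_le_quadratic)
  also have "\<dots> = 1 + s * a + s\<^sup>2 * (a\<^sup>2 * (1 + exp (s * a)))"
    by (simp add: power_mult_distrib)
  also have "\<dots> \<le> 1 + s * a + s\<^sup>2 * (2 * K\<^sup>2 + 16 / d\<^sup>2 * exp (d * a))"
    using sq_times_one_plus_exp_le[OF s lower] by (simp add: mult_left_mono)
  finally show ?thesis .
qed

lemma exp_le_one_plus_exp: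
  fixes a s d :: real
  assumes "0 \<le> s" "s \<le> d"
  shows "exp (s * a) \<le> 1 + exp (d * a)"
proof (cases "0 \<le> a")
  case True
  then have "exp (s * a) \<le> exp (d * a)"
    using assms by (simp add: mult_right_mono)
  then show ?thesis by linarith
next
  case False
  then have "exp (s * a) \<le> 1"
    using assms by (simp add: mult_nonneg_nonpos)
  then show ?thesis by (simp add: add_increasing2)
qed

lemma nn_integral_exp_le_one_plus:
  fixes p :: "'a pmf" and X :: "'a \<Rightarrow> real"
  assumes "0 \<le> s" "s \<le> d"
    and moment: "(\<integral>\<^sup>+ x. exp (d * X x) \<partial>p) \<le> ennreal E" and "0 \<le> E"
  shows "(\<integral>\<^sup>+ x. exp (s * X x) \<partial>p) \<le> ennreal (1 + E)"
proof -
  have "(\<integral>\<^sup>+ x. exp (s * X x) \<partial>p) \<le> (\<integral>\<^sup>+ x. 1 + ennreal (exp (d * X x)) \<partial>p)"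
  proof (rule nn_integral_mono)
    fix x
    have "ennreal (exp (s * X x)) \<le> ennreal (1 + exp (d * X x))"
      by (intro ennreal_leI exp_le_one_plus_exp assms)
    then show "ennreal (exp (s * X x)) \<le> 1 + ennreal (exp (d * X x))"
      by (simp add: ennreal_plus)
  qed
  also have "\<dots> = 1 + (\<integral>\<^sup>+ x. exp (d * X x) \<partial>p)"
    by (simp add: nn_integral_add measure_pmf.emeasure_space_1)
  also have "\<dots> \<le> 1 + ennreal E"
    using moment by (rule add_left_mono)
  finally show ?thesis
    using \<open>0 \<le> E\<close> by (simp add: ennreal_plus)
qed

lemma nn_integral_exp_le_second_order:
  fixes p :: "'a pmf" and X :: "'a \<Rightarrow> real"
  assumes lower: "\<And>x. x \<in> set_pmf p \<Longrightarrow> -K \<le> X x"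
    and s: "0 < s" "s \<le> d / 2"
    and int_exp: "integrable p (\<lambda>x. exp (d * X x))" and int_X: "integrable p X"
  shows "(\<integral>\<^sup>+ x. exp (s * X x) \<partial>p)
           \<le> ennreal (1 + s * measure_pmf.expectation p X
                       + s\<^sup>2 * (2 * K\<^sup>2 + 16 / d\<^sup>2 * measure_pmf.expectation p (\<lambda>x. exp (d * X x))))"
proof -
  have int_exp_s: "integrable p (\<lambda>x. exp (s * X x))"
  proof (rule Bochner_Integration.integrable_bound)
    show "integrable p (\<lambda>x. 1 + exp (d * X x))"
      using int_exp by simp
    show "AE x in p. norm (exp (s * X x)) \<le> norm (1 + exp (d * X x))"
      using exp_le_one_plus_exp[of s d] s by (simp add: add_pos_nonneg)
  qed simp
  have "measure_pmf.expectation p (\<lambda>x. exp (s * X x))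
      \<le> measure_pmf.expectation p (\<lambda>x. 1 + s * X x + s\<^sup>2 * (2 * K\<^sup>2 + 16 / d\<^sup>2 * exp (d * X x)))"
    using int_exp int_X lower exp_le_second_order_bound[OF s]
    by (intro integral_mono_AE int_exp_s) (simp_all add: AE_measure_pmf_iff)
  also have "\<dots> = 1 + s * measure_pmf.expectation p X
                 + s\<^sup>2 * (2 * K\<^sup>2 + 16 / d\<^sup>2 * measure_pmf.expectation p (\<lambda>x. exp (d * X x)))"
    using int_exp int_X by simp
  finally show ?thesis
    using int_exp_s by (simp add: nn_integral_eq_integral ennreal_leI)
qed

lemma exp_moment_contracts_near_0:
  fixes p :: "'a pmf" and X :: "'a \<Rightarrow> real"
  assumes lower: "\<And>x. x \<in> set_pmf p \<Longrightarrow> -K \<le> X x"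
    and d: "0 < d" and finite: "(\<integral>\<^sup>+ x. exp (d * X x) \<partial>p) < \<top>"
    and negative_mean: "measure_pmf.expectation p X < 0"
  shows "\<exists>s0>0. \<forall>s\<in>{0<..s0}. \<exists>\<rho>\<in>{0<..<1}. (\<integral>\<^sup>+ x. exp (s * X x) \<partial>p) \<le> ennreal \<rho>"
proof -
  define m where "m = measure_pmf.expectation p X"
  define M where "M = 2 * K\<^sup>2 + 16 / d\<^sup>2 * measure_pmf.expectation p (\<lambda>x. exp (d * X x))"
  have int_exp: "integrable p (\<lambda>x. exp (d * X x))"
    using finite by (intro integrableI_nonneg) auto
  \<comment> \<open>A non-integrable X would have Bochner integral 0, not a negative one.\<close>
  have int_X: "integrable p X"
    using negative_mean not_integrable_integral_eq by fastforce
  have "0 \<le> M"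
    unfolding M_def by (intro add_nonneg_nonneg mult_nonneg_nonneg integral_nonneg_AE) auto
  \<comment> \<open>s \<le> s0 makes the quadratic term cost at most half the drift, s M \<le> - m / 2, and keeps
    \<rho> = 1 + s m / 2 positive.\<close>
  define s0 where "s0 = min (d / 2) (min (- m / (2 * (M + 1))) (- 1 / m))"
  have "m < 0"
    using negative_mean by (simp add: m_def)
  have "0 < s0"
    using d \<open>0 \<le> M\<close> \<open>m < 0\<close> by (simp add: s0_def divide_neg_pos add_nonneg_pos)
  moreover have "\<exists>\<rho>\<in>{0<..<1}. (\<integral>\<^sup>+ x. exp (s * X x) \<partial>p) \<le> ennreal \<rho>" if "s \<in> {0<..s0}" for s
  proof (intro bexI)
    have s: "0 < s" "s \<le> d / 2" "s \<le> - m / (2 * (M + 1))" "s \<le> - 1 / m"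
      using that by (auto simp: s0_def)
    have "s * (s * M) \<le> s * (- m / 2)"
      using s \<open>0 \<le> M\<close> by (intro mult_left_mono) (simp_all add: field_simps)
    then have "1 + s * m + s\<^sup>2 * M \<le> 1 + s * m / 2"
      by (simp add: power2_eq_square algebra_simps)
    then show "(\<integral>\<^sup>+ x. exp (s * X x) \<partial>p) \<le> ennreal (1 + s * m / 2)"
      using nn_integral_exp_le_second_order[OF lower s(1,2) int_exp int_X]
      unfolding M_def m_def by (meson ennreal_leI order_trans)
    have "- 1 \<le> s * m"
      using s(4) \<open>m < 0\<close> by (simp add: field_simps)
    then show "1 + s * m / 2 \<in> {0<..<1}"
      using s(1) \<open>m < 0\<close> by (simp add: mult_pos_neg)
  qed
  ultimately show ?thesis by blast
qed

lemma nn_integral_exp_drop_snd: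
  fixes \<nu> :: "(int \<times> int) pmf"
  assumes lower: "\<And>d. d \<in> set_pmf \<nu> \<Longrightarrow> -K \<le> real_of_int (snd d)" and "0 \<le> \<gamma>"
    and joint: "(\<integral>\<^sup>+ d. exp (a * real_of_int (fst d) + \<gamma> * real_of_int (snd d)) \<partial>\<nu>) \<le> ennreal C"
  shows "(\<integral>\<^sup>+ d. exp (a * real_of_int (fst d)) \<partial>\<nu>) \<le> ennreal (C * exp (\<gamma> * K))"
proof -
  have "(\<integral>\<^sup>+ d. exp (a * real_of_int (fst d)) \<partial>\<nu>)
      \<le> (\<integral>\<^sup>+ d. ennreal (exp (a * real_of_int (fst d) + \<gamma> * real_of_int (snd d)))
                  * ennreal (exp (\<gamma> * K)) \<partial>\<nu>)"
  proof (rule nn_integral_mono_AE, unfold AE_measure_pmf_iff, intro ballI)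
    fix d assume "d \<in> set_pmf \<nu>"
    then have "0 \<le> real_of_int (snd d) + K"
      using lower by fastforce
    then have "0 \<le> \<gamma> * (real_of_int (snd d) + K)"
      using \<open>0 \<le> \<gamma>\<close> by simp
    then show "ennreal (exp (a * real_of_int (fst d)))
        \<le> ennreal (exp (a * real_of_int (fst d) + \<gamma> * real_of_int (snd d))) * ennreal (exp (\<gamma> * K))"
      by (simp add: ennreal_mult[symmetric] exp_add[symmetric] distrib_left)
  qed
  also have "\<dots> \<le> ennreal C * ennreal (exp (\<gamma> * K))"
    using joint by (simp add: nn_integral_multc mult_right_mono)
  also have "\<dots> = ennreal (C * exp (\<gamma> * K))"
    by (simp add: ennreal_mult'')
  finally show ?thesis .
qed

section \<open>First-step analysis of trajectories\<close>

lemma Nil_notin_set_pmf_traj: "[] \<notin> set_pmf (traj P n x)"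
  by (cases n) auto

lemma traj_Suc_Cons: "traj P (Suc n) x = bind_pmf (P x) (\<lambda>y. map_pmf ((#) x) (traj P n y))"
proof (induction n arbitrary: x)
  case 0
  show ?case by (simp add: bind_return_pmf map_pmf_def)
next
  case (Suc n)
  have "traj P (Suc (Suc n)) x
      = bind_pmf (P x) (\<lambda>y. bind_pmf (traj P n y) (\<lambda>q. map_pmf (\<lambda>z. (x # q) @ [z]) (P (last (x # q)))))"
    by (simp only: traj.simps(2)[of P "Suc n"] Suc.IH bind_assoc_pmf bind_map_pmf o_def)
  also have "\<dots> = bind_pmf (P x) (\<lambda>y. map_pmf ((#) x) (traj P (Suc n) y))"
    using Nil_notin_set_pmf_traj
    by (fastforce intro!: bind_pmf_cong simp: map_bind_pmf pmf.map_comp o_def)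
  finally show ?case .
qed

lemma emeasure_traj_Suc:
  "emeasure (measure_pmf (traj P (Suc n) x)) S
     = (\<integral>\<^sup>+ y. emeasure (measure_pmf (traj P n y)) ((#) x -` S) \<partial>measure_pmf (P x))"
  by (simp add: traj_Suc_Cons del: traj.simps)

text \<open>Positions in a trajectory are counted from the starting state at index 0, so these
  events include time 0, unlike hit_prob and escape_prob, which only look at times
  n \<ge> 1.\<close>

definition first_hit_at :: "'s set \<Rightarrow> nat \<Rightarrow> 's list set" where
  "first_hit_at A n = {p. p ! n \<in> A \<and> (\<forall>m<n. p ! m \<notin> A)}"

definition avoids_until :: "'s set \<Rightarrow> nat \<Rightarrow> 's list set" where
  "avoids_until A n = {p. \<forall>m\<le>n. p ! m \<notin> A}"

lemma emeasure_traj_first_hit_at_0: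
  "emeasure (measure_pmf (traj P 0 y)) (first_hit_at A 0) = indicator A y"
  by (simp add: first_hit_at_def indicator_def)

lemma emeasure_traj_first_hit_at_Suc:
  "emeasure (measure_pmf (traj P (Suc n) y)) (first_hit_at A (Suc n))
     = (if y \<in> A then 0
        else \<integral>\<^sup>+ z. emeasure (measure_pmf (traj P n z)) (first_hit_at A n) \<partial>measure_pmf (P y))"
proof -
  have "(#) y -` first_hit_at A (Suc n) = (if y \<in> A then {} else first_hit_at A n)"
    by (auto simp: first_hit_at_def All_less_Suc2)
  then show ?thesis by (simp add: emeasure_traj_Suc del: traj.simps)
qed

lemma emeasure_traj_avoids_until_Suc:
  "emeasure (measure_pmf (traj P (Suc n) y)) (avoids_until A (Suc n))
     = (if y \<in> A then 0
        else \<integral>\<^sup>+ z. emeasure (measure_pmf (traj P n z)) (avoids_until A n) \<partial>measure_pmf (P y))"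
proof -
  have "(#) y -` avoids_until A (Suc n) = (if y \<in> A then {} else avoids_until A n)"
    by (auto simp: avoids_until_def nth_Cons split: nat.split)
  then show ?thesis by (simp add: emeasure_traj_Suc del: traj.simps)
qed

lemma hit_prob_Suc:
  "ennreal (hit_prob P A (Suc n) x)
     = (\<integral>\<^sup>+ y. emeasure (measure_pmf (traj P n y)) (first_hit_at A n) \<partial>measure_pmf (P x))"
proof -
  have "(#) x -` {p. p ! Suc n \<in> A \<and> (\<forall>m\<in>{1..<Suc n}. p ! m \<notin> A)} = first_hit_at A n"
    by (auto simp: first_hit_at_def Ball_def less_Suc_eq_0_disj)
  then show ?thesis
    by (simp add: hit_prob_def measure_pmf.emeasure_eq_measure[symmetric] emeasure_traj_Suc del: traj.simps)
qed

lemma prob_traj_avoids_Suc: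
  "ennreal (measure_pmf.prob (traj P (Suc n) x) {p. \<forall>m\<in>{1..Suc n}. p ! m \<notin> A})
     = (\<integral>\<^sup>+ y. emeasure (measure_pmf (traj P n y)) (avoids_until A n) \<partial>measure_pmf (P x))"
proof -
  have "(#) x -` {p. \<forall>m\<in>{1..Suc n}. p ! m \<notin> A} = avoids_until A n"
    by (auto simp: avoids_until_def Ball_def Suc_le_eq gr0_conv_Suc)
  then show ?thesis
    by (simp add: measure_pmf.emeasure_eq_measure[symmetric] emeasure_traj_Suc del: traj.simps)
qed

section \<open>A geometric drift criterion\<close>

context
  fixes P :: "'s \<Rightarrow> 's pmf" and A :: "'s set" and L :: "'s \<Rightarrow> ennreal" and \<rho> :: real
  assumes L_ge_1_after_step: "\<And>y z. y \<notin> A \<Longrightarrow> z \<in> set_pmf (P y) \<Longrightarrow> 1 \<le> L z"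
    and geometric_drift: "\<And>y. y \<notin> A \<Longrightarrow> (\<integral>\<^sup>+ z. L z \<partial>measure_pmf (P y)) \<le> ennreal \<rho> * L y"
    and \<rho>_pos: "0 < \<rho>"
begin

lemma emeasure_traj_avoids_until_le:
  "1 \<le> L y \<Longrightarrow> emeasure (measure_pmf (traj P N y)) (avoids_until A N) \<le> ennreal (\<rho> ^ N) * L y"
proof (induction N arbitrary: y)
  case 0
  have "emeasure (measure_pmf (traj P 0 y)) (avoids_until A 0) \<le> 1"
    by (rule measure_pmf.emeasure_le_1)
  also have "1 \<le> L y"
    by (fact 0)
  finally show ?case
    by simp
next
  case (Suc N)
  show ?case
  proof (cases "y \<in> A")
    case True
    then show ?thesis by (simp add: emeasure_traj_avoids_until_Suc del: traj.simps)
  next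
    case False
    have "emeasure (measure_pmf (traj P (Suc N) y)) (avoids_until A (Suc N))
        = (\<integral>\<^sup>+ z. emeasure (measure_pmf (traj P N z)) (avoids_until A N) \<partial>measure_pmf (P y))"
      using False by (simp add: emeasure_traj_avoids_until_Suc del: traj.simps)
    also have "\<dots> \<le> (\<integral>\<^sup>+ z. ennreal (\<rho> ^ N) * L z \<partial>measure_pmf (P y))"
      using False by (intro nn_integral_mono_AE) (simp add: AE_measure_pmf_iff Suc.IH L_ge_1_after_step)
    also have "\<dots> \<le> ennreal (\<rho> ^ N) * (ennreal \<rho> * L y)"
      using False by (simp add: nn_integral_cmult mult_left_mono geometric_drift)
    also have "\<dots> = ennreal (\<rho> ^ Suc N) * L y"
      using \<rho>_pos by (simp add: ennreal_mult mult_ac)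
    finally show ?thesis .
  qed
qed

lemma sum_first_hit_at_le:
  "1 \<le> L y \<Longrightarrow>
     (\<Sum>m<N. ennreal (1 / \<rho>) ^ m * emeasure (measure_pmf (traj P m y)) (first_hit_at A m)) \<le> L y"
proof (induction N arbitrary: y)
  case 0
  then show ?case by simp
next
  case (Suc N)
  let ?h = "\<lambda>m z. emeasure (measure_pmf (traj P m z)) (first_hit_at A m)"
  have shift: "(\<Sum>m<Suc N. ennreal (1 / \<rho>) ^ m * ?h m y)
      = ?h 0 y + (\<Sum>m<N. ennreal (1 / \<rho>) ^ Suc m * ?h (Suc m) y)"
    by (subst sum.lessThan_Suc_shift) simp
  show ?case
  proof (cases "y \<in> A")
    case True
    then show ?thesis
      using Suc.prems unfolding shift by (simp add: emeasure_traj_first_hit_at_0 emeasure_traj_first_hit_at_Suc del: traj.simps)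
  next
    case False
    have "(\<Sum>m<Suc N. ennreal (1 / \<rho>) ^ m * ?h m y)
        = ennreal (1 / \<rho>) * (\<integral>\<^sup>+ z. (\<Sum>m<N. ennreal (1 / \<rho>) ^ m * ?h m z) \<partial>measure_pmf (P y))"
      using False unfolding shift
      by (simp add: emeasure_traj_first_hit_at_0 emeasure_traj_first_hit_at_Suc nn_integral_sum
          nn_integral_cmult sum_distrib_left mult.assoc del: traj.simps)
    also have "\<dots> \<le> ennreal (1 / \<rho>) * (\<integral>\<^sup>+ z. L z \<partial>measure_pmf (P y))"
      using False
      by (intro mult_left_mono nn_integral_mono_AE) (simp_all add: AE_measure_pmf_iff Suc.IH L_ge_1_after_step)
    also have "\<dots> \<le> ennreal (1 / \<rho>) * (ennreal \<rho> * L y)"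
      using False by (simp add: mult_left_mono geometric_drift)
    also have "\<dots> = L y"
      using \<rho>_pos by (simp add: mult.assoc[symmetric] ennreal_mult[symmetric])
    finally show ?thesis .
  qed
qed

lemma series_hit_prob_le:
  assumes start: "\<And>z. z \<in> set_pmf (P x) \<Longrightarrow> 1 \<le> L z"
  shows "(\<Sum>n. ennreal (exp (- ln \<rho> * real (Suc n))) * ennreal (hit_prob P A (Suc n) x))
           \<le> ennreal (1 / \<rho>) * (\<integral>\<^sup>+ z. L z \<partial>measure_pmf (P x))"
proof (rule suminf_le_const[OF summableI])
  fix N
  let ?h = "\<lambda>m z. emeasure (measure_pmf (traj P m z)) (first_hit_at A m)"
  have exp_eq: "ennreal (exp (- ln \<rho> * real (Suc n))) = ennreal (1 / \<rho>) * ennreal (1 / \<rho>) ^ n" for n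
  proof -
    have "- ln \<rho> * real (Suc n) = real (Suc n) * ln (1 / \<rho>)"
      using \<rho>_pos by (simp add: ln_div)
    then have "exp (- ln \<rho> * real (Suc n)) = (1 / \<rho>) ^ Suc n"
      using \<rho>_pos by (simp only: exp_of_nat_mult) simp
    then show ?thesis
      using \<rho>_pos by (simp add: ennreal_power ennreal_mult'[symmetric])
  qed
  have "(\<Sum>n<N. ennreal (exp (- ln \<rho> * real (Suc n))) * ennreal (hit_prob P A (Suc n) x))
      = ennreal (1 / \<rho>) * (\<integral>\<^sup>+ z. (\<Sum>m<N. ennreal (1 / \<rho>) ^ m * ?h m z) \<partial>measure_pmf (P x))"
    unfolding exp_eq hit_prob_Suc
    by (simp add: nn_integral_sum nn_integral_cmult sum_distrib_left mult.assoc
        del: traj.simps)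
  also have "\<dots> \<le> ennreal (1 / \<rho>) * (\<integral>\<^sup>+ z. L z \<partial>measure_pmf (P x))"
    by (intro mult_left_mono nn_integral_mono_AE) (simp_all add: AE_measure_pmf_iff sum_first_hit_at_le start)
  finally show "(\<Sum>n<N. ennreal (exp (- ln \<rho> * real (Suc n))) * ennreal (hit_prob P A (Suc n) x))
      \<le> ennreal (1 / \<rho>) * (\<integral>\<^sup>+ z. L z \<partial>measure_pmf (P x))" .
qed

lemma escape_prob_eq_0:
  assumes "\<rho> < 1"
    and start: "\<And>z. z \<in> set_pmf (P x) \<Longrightarrow> 1 \<le> L z"
    and finite: "(\<integral>\<^sup>+ z. L z \<partial>measure_pmf (P x)) < \<top>"
  shows "escape_prob P A x = 0"
proof -
  define f where "f n = measure_pmf.prob (traj P n x) {p. \<forall>m\<in>{1..n}. p ! m \<notin> A}" for n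
  define c where "c = enn2real (\<integral>\<^sup>+ z. L z \<partial>measure_pmf (P x))"
  have f_Suc_le: "f (Suc N) \<le> \<rho> ^ N * c" for N
  proof -
    have "ennreal (f (Suc N)) \<le> (\<integral>\<^sup>+ z. ennreal (\<rho> ^ N) * L z \<partial>measure_pmf (P x))"
      unfolding f_def prob_traj_avoids_Suc
      by (intro nn_integral_mono_AE) (simp add: AE_measure_pmf_iff emeasure_traj_avoids_until_le start)
    also have "\<dots> = ennreal (\<rho> ^ N * c)"
      using finite \<rho>_pos by (simp add: nn_integral_cmult c_def ennreal_mult)
    finally show ?thesis using \<rho>_pos by (simp add: ennreal_le_iff c_def)
  qed
  have bdd: "bdd_below (range f)"
    by (intro bdd_belowI[of _ 0]) (auto simp: f_def)
  have "escape_prob P A x = (INF n. f n)"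
    by (simp add: escape_prob_def f_def)
  also have "\<dots> \<le> 0"
  proof (rule LIMSEQ_le_const)
    show "(\<lambda>N. \<rho> ^ N * c) \<longlonglongrightarrow> 0"
      using \<rho>_pos \<open>\<rho> < 1\<close> by (intro tendsto_mult_left_zero LIMSEQ_power_zero) simp
    show "\<exists>M. \<forall>N\<ge>M. (INF n. f n) \<le> \<rho> ^ N * c"
      using cINF_lower[OF bdd] f_Suc_le by (meson UNIV_I order_trans)
  qed
  finally show ?thesis
    by (simp add: escape_prob_def antisym cINF_greatest)
qed

theorem exp_moment_hit_le_geometric_drift:
  assumes "\<rho> < 1"
    and start: "\<And>z. z \<in> set_pmf (P x) \<Longrightarrow> 1 \<le> L z"
    and bound: "(\<integral>\<^sup>+ z. L z \<partial>measure_pmf (P x)) \<le> ennreal B"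
  shows "exp_moment_hit P A (- ln \<rho>) x \<le> ennreal (B / \<rho>)"
proof -
  have "escape_prob P A x = 0"
    by (rule escape_prob_eq_0[OF \<open>\<rho> < 1\<close> start le_less_trans[OF bound ennreal_less_top]])
  then have "exp_moment_hit P A (- ln \<rho>) x
      = (\<Sum>n. ennreal (exp (- ln \<rho> * real (Suc n))) * ennreal (hit_prob P A (Suc n) x))"
    by (simp add: exp_moment_hit_def)
  also have "\<dots> \<le> ennreal (1 / \<rho>) * ennreal B"
    using series_hit_prob_le[OF start] bound by (meson mult_left_mono order_trans zero_le)
  also have "\<dots> = ennreal (B / \<rho>)"
    using \<rho>_pos by (simp add: ennreal_mult'[symmetric])
  finally show ?thesis .
qed

end

section \<open>The chain Z1\<close>

definition jumpZ1 ::
    "nat \<Rightarrow> (int \<times> int) pmf \<Rightarrow> (nat \<Rightarrow> (int \<times> int) pmf) \<Rightarrow> nat \<Rightarrow> (int \<times> int) pmf" where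
  "jumpZ1 k0 \<mu> \<mu>'' i = (if k0 \<le> i then \<mu> else \<mu>'' i)"

lemma stepZ1_eq_shift_jumpZ1:
  "0 \<le> fst x \<Longrightarrow> stepZ1 k0 \<mu> \<mu>'' x = shift x (jumpZ1 k0 \<mu> \<mu>'' (nat (fst x)))"
  by (simp add: stepZ1_def jumpZ1_def le_nat_iff)

lemma lawZ_at_height_k0: "lawZ k0 \<mu> \<mu>' \<mu>'' \<mu>2 (int i, int k0) = jumpZ1 k0 \<mu> \<mu>'' i"
  by (simp add: lawZ_def jumpZ1_def)

lemma set_pmf_jumpZ1_lower:
  assumes "\<forall>(a, b)\<in>set_pmf \<mu>. a \<ge> - int k0 \<and> b \<ge> - int k0"
    and "\<forall>i<k0. \<forall>(a, b)\<in>set_pmf (\<mu>'' i). b \<ge> - int k0 \<and> a \<ge> - int i"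
    and "d \<in> set_pmf (jumpZ1 k0 \<mu> \<mu>'' i)"
  shows "- int i \<le> fst d \<and> - int k0 \<le> snd d"
proof (cases "k0 \<le> i")
  case True
  then show ?thesis
    using assms(1,3) by (cases d) (auto simp: jumpZ1_def)
next
  case False
  then have "\<forall>(a, b)\<in>set_pmf (\<mu>'' i). b \<ge> - int k0 \<and> a \<ge> - int i"
    using assms(2) by simp
  with False show ?thesis
    using assms(3) by (cases d) (auto simp: jumpZ1_def)
qed

lemma nn_integral_exp_fst_shift:
  "(\<integral>\<^sup>+ z. exp (s * real_of_int (fst z)) \<partial>shift x \<nu>)
     = ennreal (exp (s * real_of_int (fst x))) * (\<integral>\<^sup>+ d. exp (s * real_of_int (fst d)) \<partial>\<nu>)"
  by (simp add: shift_def distrib_left exp_add ennreal_mult nn_integral_cmult)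

lemma nn_integral_exp_fst_stepZ1:
  "0 \<le> fst x \<Longrightarrow> (\<integral>\<^sup>+ z. exp (s * real_of_int (fst z)) \<partial>stepZ1 k0 \<mu> \<mu>'' x)
     = ennreal (exp (s * real_of_int (fst x)))
         * (\<integral>\<^sup>+ d. exp (s * real_of_int (fst d)) \<partial>jumpZ1 k0 \<mu> \<mu>'' (nat (fst x)))"
  by (simp add: stepZ1_eq_shift_jumpZ1 nn_integral_exp_fst_shift)

lemma fst_nonneg_after_stepZ1:
  assumes jumps_fst: "\<And>i d. d \<in> set_pmf (jumpZ1 k0 \<mu> \<mu>'' i) \<Longrightarrow> - int i \<le> fst d"
    and "0 \<le> fst x" and "z \<in> set_pmf (stepZ1 k0 \<mu> \<mu>'' x)"
  shows "0 \<le> fst z"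
  using assms by (fastforce simp: stepZ1_eq_shift_jumpZ1 shift_def)

lemma exp_moment_hit_stepZ1_le:
  fixes s \<rho> E :: real
  assumes jumps_fst: "\<And>i d. d \<in> set_pmf (jumpZ1 k0 \<mu> \<mu>'' i) \<Longrightarrow> - int i \<le> fst d"
    and "0 \<le> s" and \<rho>: "0 < \<rho>" "\<rho> < 1"
    and contraction: "(\<integral>\<^sup>+ d. exp (s * real_of_int (fst d)) \<partial>\<mu>) \<le> ennreal \<rho>"
    and jumps_exp: "\<And>i. (\<integral>\<^sup>+ d. exp (s * real_of_int (fst d)) \<partial>jumpZ1 k0 \<mu> \<mu>'' i) \<le> ennreal E"
  shows "exp_moment_hit (stepZ1 k0 \<mu> \<mu>'') {x. fst x \<le> max (int k0 - 1) (int k)} (- ln \<rho>) (int i, j)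
           \<le> ennreal (E * exp (s * real i) / \<rho>)"
proof (rule exp_moment_hit_le_geometric_drift[where L = "\<lambda>z. ennreal (exp (s * real_of_int (fst z)))"])
  let ?A = "{x. fst x \<le> max (int k0 - 1) (int k)}"
  have one_le_L: "1 \<le> ennreal (exp (s * real_of_int (fst z)))"
    if "0 \<le> fst x" "z \<in> set_pmf (stepZ1 k0 \<mu> \<mu>'' x)" for x z
    using fst_nonneg_after_stepZ1[OF jumps_fst that] \<open>0 \<le> s\<close> by simp
  show "1 \<le> ennreal (exp (s * real_of_int (fst z)))" if "y \<notin> ?A" "z \<in> set_pmf (stepZ1 k0 \<mu> \<mu>'' y)" for y z
    using that by (intro one_le_L[of y]) auto
  show "1 \<le> ennreal (exp (s * real_of_int (fst z)))" if "z \<in> set_pmf (stepZ1 k0 \<mu> \<mu>'' (int i, j))" for z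
    using that by (intro one_le_L[of "(int i, j)"]) auto
  show "(\<integral>\<^sup>+ z. exp (s * real_of_int (fst z)) \<partial>stepZ1 k0 \<mu> \<mu>'' y)
          \<le> ennreal \<rho> * ennreal (exp (s * real_of_int (fst y)))" if "y \<notin> ?A" for y
  proof -
    have "int k0 \<le> fst y"
      using that by auto
    then have "jumpZ1 k0 \<mu> \<mu>'' (nat (fst y)) = \<mu>"
      by (simp add: jumpZ1_def le_nat_iff)
    with \<open>int k0 \<le> fst y\<close> show ?thesis
      using mult_left_mono[OF contraction, of "ennreal (exp (s * real_of_int (fst y)))"]
      by (simp add: nn_integral_exp_fst_stepZ1 mult.commute)
  qed
  show "(\<integral>\<^sup>+ z. exp (s * real_of_int (fst z)) \<partial>stepZ1 k0 \<mu> \<mu>'' (int i, j))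
      \<le> ennreal (E * exp (s * real i))"
    using mult_left_mono[OF jumps_exp[of i], of "ennreal (exp (s * real i))"]
    by (simp add: nn_integral_exp_fst_stepZ1 ennreal_mult'' mult.commute)
qed (use \<rho> in simp_all)

lemma exp_moment_hit_stepZ1_exp_bound:
  assumes jumps_fst: "\<And>i d. d \<in> set_pmf (jumpZ1 k0 \<mu> \<mu>'' i) \<Longrightarrow> - int i \<le> fst d"
    and "0 < \<delta>0" "0 \<le> E0"
    and jumps_exp: "\<And>i. (\<integral>\<^sup>+ d. exp (\<delta>0 * real_of_int (fst d)) \<partial>jumpZ1 k0 \<mu> \<mu>'' i) \<le> ennreal E0"
    and negative_mean: "measure_pmf.expectation \<mu> (\<lambda>d. real_of_int (fst d)) < 0"
    and "0 < \<theta>"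
  shows "\<exists>C>0. \<exists>\<delta>>0. \<forall>(i::nat) (j::int) (k::nat).
           exp_moment_hit (stepZ1 k0 \<mu> \<mu>'') {x. fst x \<le> max (int k0 - 1) (int k)} \<delta> (int i, j)
             \<le> ennreal (C * exp (\<theta> * real i))"
proof -
  have \<mu>: "jumpZ1 k0 \<mu> \<mu>'' k0 = \<mu>"
    by (simp add: jumpZ1_def)
  obtain s0 where "0 < s0"
    and contracts: "\<forall>s\<in>{0<..s0}. \<exists>\<rho>\<in>{0<..<1}. (\<integral>\<^sup>+ d. exp (s * real_of_int (fst d)) \<partial>\<mu>) \<le> ennreal \<rho>"
    using exp_moment_contracts_near_0[of \<mu> "real k0" "\<lambda>d. real_of_int (fst d)" \<delta>0]
      jumps_fst[of _ k0] jumps_exp[of k0] \<open>0 < \<delta>0\<close> negative_mean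
      le_less_trans[OF _ ennreal_less_top] unfolding \<mu> by fastforce
  define s where "s = min s0 (min \<theta> \<delta>0)"
  have s: "0 < s" "s \<le> s0" "s \<le> \<theta>" "s \<le> \<delta>0"
    using \<open>0 < s0\<close> \<open>0 < \<theta>\<close> \<open>0 < \<delta>0\<close> by (auto simp: s_def)
  then obtain \<rho> where \<rho>: "0 < \<rho>" "\<rho> < 1"
    and contraction: "(\<integral>\<^sup>+ d. exp (s * real_of_int (fst d)) \<partial>\<mu>) \<le> ennreal \<rho>"
    using contracts by fastforce
  have "(\<integral>\<^sup>+ d. exp (s * real_of_int (fst d)) \<partial>jumpZ1 k0 \<mu> \<mu>'' i) \<le> ennreal (1 + E0)" for i
    using s by (intro nn_integral_exp_le_one_plus[OF _ _ jumps_exp \<open>0 \<le> E0\<close>]) simp_all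
  then have "exp_moment_hit (stepZ1 k0 \<mu> \<mu>'') {x. fst x \<le> max (int k0 - 1) (int k)} (- ln \<rho>) (int i, j)
          \<le> ennreal ((1 + E0) * exp (s * real i) / \<rho>)" for i j k
    using s by (intro exp_moment_hit_stepZ1_le[OF jumps_fst _ \<rho> contraction]) simp_all
  moreover have "(1 + E0) * exp (s * real i) / \<rho> \<le> (1 + E0) / \<rho> * exp (\<theta> * real i)" for i
    using s \<rho> \<open>0 \<le> E0\<close> by (simp add: divide_right_mono mult_left_mono mult_right_mono)
  ultimately have "exp_moment_hit (stepZ1 k0 \<mu> \<mu>'') {x. fst x \<le> max (int k0 - 1) (int k)} (- ln \<rho>) (int i, j)
          \<le> ennreal ((1 + E0) / \<rho> * exp (\<theta> * real i))" for i j k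
    by (meson ennreal_leI order_trans)
  moreover have "0 < (1 + E0) / \<rho>" and "0 < - ln \<rho>"
    using \<rho> \<open>0 \<le> E0\<close> by simp_all
  ultimately show ?thesis
    by blast
qed

theorem corollary5p3:
  fixes k0 :: nat
    and \<mu> :: "(int \<times> int) pmf"
    and \<mu>' \<mu>'' :: "nat \<Rightarrow> (int \<times> int) pmf"
    and \<mu>2 :: "nat \<Rightarrow> nat \<Rightarrow> (int \<times> int) pmf"
  assumes k0: "k0 \<ge> 1"
    and A1_mu: "\<forall>(a, b)\<in>set_pmf \<mu>. a \<ge> - int k0 \<and> b \<ge> - int k0"
    and A1_mu': "\<forall>j<k0. \<forall>(a, b)\<in>set_pmf (\<mu>' j). a \<ge> - int k0 \<and> b \<ge> - int j"
    and A1_mu'': "\<forall>i<k0. \<forall>(a, b)\<in>set_pmf (\<mu>'' i). b \<ge> - int k0 \<and> a \<ge> - int i"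
    and A1_mu2: "\<forall>i<k0. \<forall>j<k0. \<forall>(a, b)\<in>set_pmf (\<mu>2 i j). a \<ge> - int i \<and> b \<ge> - int j"
    and A2: "\<exists>\<delta>0 \<gamma> C0. \<delta>0 > 0 \<and> \<gamma> > 0 \<and> C0 > 0 \<and>
              (\<forall>i j :: nat. (\<integral>\<^sup>+ d. ennreal (exp (\<delta>0 * real_of_int (fst d) + \<gamma> * real_of_int (snd d)))
                   \<partial>measure_pmf (lawZ k0 \<mu> \<mu>' \<mu>'' \<mu>2 (int i, int j))) \<le> ennreal C0)"
    and A3_Z0: "irreducible_on UNIV (stepZ0 \<mu>)"
    and A3_Z1: "irreducible_on {x. fst x \<ge> 0} (stepZ1 k0 \<mu> \<mu>'')"
    and A3_Z2: "irreducible_on {x. snd x \<ge> 0} (stepZ2 k0 \<mu> \<mu>')"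
    and A3_Z: "irreducible_on {x. fst x \<ge> 0 \<and> snd x \<ge> 0} (stepZ k0 \<mu> \<mu>' \<mu>'' \<mu>2)"
    and m1: "measure_pmf.expectation \<mu> (\<lambda>d. real_of_int (fst d)) < 0"
  shows "\<forall>\<theta>>0. \<exists>C>0. \<exists>\<delta>>0. \<forall>(i::nat) (j::int) (k::nat).
           exp_moment_hit (stepZ1 k0 \<mu> \<mu>'') {x. fst x \<le> max (int k0 - 1) (int k)} \<delta> (int i, j)
             \<le> ennreal (C * exp (\<theta> * real i))"
proof (intro allI impI)
  fix \<theta> :: real
  assume "0 < \<theta>"
  obtain \<delta>0 \<gamma> C0 where "0 < \<delta>0" "0 < \<gamma>" "0 < C0"
    and joint: "\<And>i j :: nat. (\<integral>\<^sup>+ d. exp (\<delta>0 * real_of_int (fst d) + \<gamma> * real_of_int (snd d))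
                   \<partial>lawZ k0 \<mu> \<mu>' \<mu>'' \<mu>2 (int i, int j)) \<le> ennreal C0"
    using A2 by blast
  have jumps_fst: "- int i \<le> fst d" and jumps_snd: "- real k0 \<le> real_of_int (snd d)"
    if "d \<in> set_pmf (jumpZ1 k0 \<mu> \<mu>'' i)" for i d
    using set_pmf_jumpZ1_lower[OF A1_mu A1_mu'' that] by simp_all
  have jumps_exp: "(\<integral>\<^sup>+ d. exp (\<delta>0 * real_of_int (fst d)) \<partial>jumpZ1 k0 \<mu> \<mu>'' i)
      \<le> ennreal (C0 * exp (\<gamma> * real k0))" for i
    using joint[of i k0] \<open>0 < \<gamma>\<close>
    by (intro nn_integral_exp_drop_snd[OF jumps_snd]) (simp_all add: lawZ_at_height_k0)
  have bound_nonneg: "0 \<le> C0 * exp (\<gamma> * real k0)"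
    using \<open>0 < C0\<close> by simp
  show "\<exists>C>0. \<exists>\<delta>>0. \<forall>(i::nat) (j::int) (k::nat).
           exp_moment_hit (stepZ1 k0 \<mu> \<mu>'') {x. fst x \<le> max (int k0 - 1) (int k)} \<delta> (int i, j)
             \<le> ennreal (C * exp (\<theta> * real i))"
    by (rule exp_moment_hit_stepZ1_exp_bound[OF _ \<open>0 < \<delta>0\<close> bound_nonneg jumps_exp m1 \<open>0 < \<theta>\<close>]) (rule jumps_fst)
qed

end
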